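(* For every $\alpha\in(0,1)$, \[ \sum_{t=1}^\infty\Big(1-\frac{1}{t^\alpha}\Big)^t\ \le\ \frac{1}{1-\alpha}\,\Gamma\Big(\frac{1}{1-\alpha}\Big). \]
   Context: $\Gamma(z)=\int_0^\infty t^{z-1}e^{-t}\,dt$ is the Gamma function. *)

theory Defs
  imports "HOL-Analysis.Analysis"
begin

end

theory Submission
  imports Defs
begin

text \<open>
  Since \<open>1 - y \<le> e\<^sup>-\<^sup>y\<close>, the \<open>t\<close>-th term is at most \<open>exp (- t\<^sup>\<beta>)\<close> with \<open>\<beta> = 1 - \<alpha>\<close>.
  Put \<open>p = 1/\<beta>\<close>. On \<open>[(t-1)\<^sup>\<beta>, t\<^sup>\<beta>]\<close> the factor \<open>e\<^sup>-\<^sup>u\<close> is at least \<open>exp (- t\<^sup>\<beta>)\<close>, while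
  \<open>p \<integral> u\<^sup>p\<^sup>-\<^sup>1 du = t - (t-1) = 1\<close> there; so \<open>exp (- t\<^sup>\<beta>) \<le> p \<integral> u\<^sup>p\<^sup>-\<^sup>1 e\<^sup>-\<^sup>u du\<close> over that
  interval, and summing over \<open>t\<close> bounds the series by \<open>p \<Gamma>(p)\<close>.
\<close>

lemma one_minus_inverse_powr_power_le_exp:
  fixes \<alpha> :: real and n :: nat
  assumes "0 \<le> \<alpha>" "n > 0"
  shows "(1 - 1 / real n powr \<alpha>) ^ n \<le> exp (- (real n powr (1 - \<alpha>)))"
proof -
  have "real n powr (1 - \<alpha>) \<le> real n powr 1"
    using assms by (intro powr_mono) auto
  then have "(1 - real n powr (1 - \<alpha>) / real n) ^ n \<le> exp (- (real n powr (1 - \<alpha>)))"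
    using assms by (intro exp_ge_one_minus_x_over_n_power_n) auto
  moreover have "real n powr (1 - \<alpha>) / real n = 1 / real n powr \<alpha>"
    using assms by (simp add: powr_diff)
  ultimately show ?thesis by simp
qed

lemma has_integral_powr_minus_one:
  fixes a b p :: real
  assumes "0 \<le> a" "a \<le> b" "p > 0"
  shows "((\<lambda>u. u powr (p - 1)) has_integral (b powr p - a powr p) / p) {a..b}"
proof -
  have from_0: "((\<lambda>u. u powr (p - 1)) has_integral c powr p / p) {0..c}" if "c \<ge> 0" for c
    using has_integral_powr_from_0[of "p - 1" c] that assms by simp
  have integrable: "(\<lambda>u. u powr (p - 1)) integrable_on {0..b}"
    using from_0 assms by (meson has_integral_integrable order_trans)
  have "integral {0..a} (\<lambda>u. u powr (p - 1)) + integral {a..b} (\<lambda>u. u powr (p - 1))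
      = integral {0..b} (\<lambda>u. u powr (p - 1))"
    by (rule Henstock_Kurzweil_Integration.integral_combine[OF assms(1,2) integrable])
  then have "integral {a..b} (\<lambda>u. u powr (p - 1)) = (b powr p - a powr p) / p"
    using assms integral_unique[OF from_0[of a]] integral_unique[OF from_0[of b]]
    by (simp add: diff_divide_distrib)
  moreover have "(\<lambda>u. u powr (p - 1)) integrable_on {a..b}"
    using assms by (intro integrable_on_subinterval[OF integrable]) auto
  ultimately show ?thesis
    by (metis has_integral_integral)
qed

lemma integral_Gamma_integrand_ge:
  fixes a b p :: real
  assumes "0 \<le> a" "a \<le> b" "p > 0"
  shows "exp (- b) * ((b powr p - a powr p) / p) \<le> integral {a..b} (\<lambda>u. u powr (p - 1) / exp u)"
proof -
  have "(\<lambda>u. u powr (p - 1) / exp u) integrable_on {a..b}"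
    using assms
    by (intro integrable_on_subinterval[OF has_integral_integrable[OF Gamma_integral_real]]) auto
  moreover have "((\<lambda>u. exp (- b) * u powr (p - 1))
      has_integral exp (- b) * ((b powr p - a powr p) / p)) {a..b}"
    using assms by (intro has_integral_mult_right has_integral_powr_minus_one)
  moreover have "exp (- b) * u powr (p - 1) \<le> u powr (p - 1) / exp u" if "u \<in> {a..b}" for u
  proof -
    have "exp (- b) \<le> exp (- u)" using that by simp
    then show ?thesis by (simp add: exp_minus divide_inverse mult_right_mono mult.commute)
  qed
  ultimately show ?thesis
    by (meson has_integral_integral has_integral_le)
qed

lemma sum_exp_neg_powr_le_integral:
  fixes \<beta> :: real
  assumes "\<beta> > 0"
  shows "(\<Sum>t<N. exp (- (real (Suc t) powr \<beta>)))
    \<le> 1 / \<beta> * integral {0..real N powr \<beta>} (\<lambda>u. u powr (1 / \<beta> - 1) / exp u)"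
proof (induction N)
  case 0
  then show ?case by simp
next
  case (Suc N)
  define h where "h = (\<lambda>u::real. u powr (1 / \<beta> - 1) / exp u)"
  define c where "c = real N powr \<beta>"
  define d where "d = real (Suc N) powr \<beta>"
  have "0 \<le> c" "c \<le> d"
    using assms by (auto simp: c_def d_def intro!: powr_mono2)
  have integrable: "h integrable_on {0..d}"
    using has_integral_integrable[OF Gamma_integral_real[of "1 / \<beta>"]] assms
    by (auto simp: h_def intro: integrable_on_subinterval)
  have "(d powr (1 / \<beta>) - c powr (1 / \<beta>)) / (1 / \<beta>) = \<beta>"
    using assms by (simp add: c_def d_def powr_powr)
  then have "exp (- d) * \<beta> \<le> integral {c..d} h"
    using integral_Gamma_integrand_ge[OF \<open>0 \<le> c\<close> \<open>c \<le> d\<close>, of "1 / \<beta>"] assms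
    by (simp add: h_def)
  then have "exp (- d) \<le> 1 / \<beta> * integral {c..d} h"
    using assms by (simp add: field_simps)
  moreover have combine: "integral {0..c} h + integral {c..d} h = integral {0..d} h"
    by (rule Henstock_Kurzweil_Integration.integral_combine[OF \<open>0 \<le> c\<close> \<open>c \<le> d\<close> integrable])
  ultimately have "(\<Sum>t<N. exp (- (real (Suc t) powr \<beta>))) + exp (- d)
      \<le> 1 / \<beta> * integral {0..c} h + 1 / \<beta> * integral {c..d} h"
    using Suc.IH by (simp add: c_def h_def)
  also have "\<dots> = 1 / \<beta> * integral {0..d} h"
    using combine by (metis distrib_left)
  finally show ?case
    by (simp add: d_def h_def)
qed

lemma sum_exp_neg_powr_le_Gamma:
  fixes \<beta> :: real
  assumes "\<beta> > 0"
  shows "(\<Sum>t<N. exp (- (real (Suc t) powr \<beta>))) \<le> 1 / \<beta> * Gamma (1 / \<beta>)"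
proof -
  have Gamma: "((\<lambda>u. u powr (1 / \<beta> - 1) / exp u) has_integral Gamma (1 / \<beta>)) {0..}"
    using assms by (intro Gamma_integral_real) simp
  have "(\<Sum>t<N. exp (- (real (Suc t) powr \<beta>)))
      \<le> 1 / \<beta> * integral {0..real N powr \<beta>} (\<lambda>u. u powr (1 / \<beta> - 1) / exp u)"
    using assms by (rule sum_exp_neg_powr_le_integral)
  also have "\<dots> \<le> 1 / \<beta> * integral {0..} (\<lambda>u. u powr (1 / \<beta> - 1) / exp u)"
    using has_integral_integrable[OF Gamma] assms
    by (intro mult_left_mono integral_subset_le integrable_on_subinterval) auto
  finally show ?thesis
    using integral_unique[OF Gamma] by simp
qed

lemma summable_exp_neg_powr:
  fixes \<beta> :: real
  assumes "\<beta> > 0"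
  shows "summable (\<lambda>t. exp (- (real (Suc t) powr \<beta>)))"
proof (rule bounded_imp_summable)
  show "(\<Sum>k\<le>n. exp (- (real (Suc k) powr \<beta>))) \<le> 1 / \<beta> * Gamma (1 / \<beta>)" for n
    using sum_exp_neg_powr_le_Gamma[OF assms, of "Suc n"] by (simp add: lessThan_Suc_atMost)
qed simp

lemma suminf_exp_neg_powr_le_Gamma:
  fixes \<beta> :: real
  assumes "\<beta> > 0"
  shows "(\<Sum>t. exp (- (real (Suc t) powr \<beta>))) \<le> 1 / \<beta> * Gamma (1 / \<beta>)"
  using summable_exp_neg_powr[OF assms] sum_exp_neg_powr_le_Gamma[OF assms]
  by (rule suminf_le_const)

theorem lemma7:
  fixes \<alpha> :: real
  assumes "0 < \<alpha>" and "\<alpha> < 1"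
  shows "summable (\<lambda>t::nat. (1 - 1 / real (Suc t) powr \<alpha>) ^ Suc t)
    \<and> (\<Sum>t. (1 - 1 / real (Suc t) powr \<alpha>) ^ Suc t)
        \<le> 1 / (1 - \<alpha>) * Gamma (1 / (1 - \<alpha>))"
proof -
  define \<beta> where "\<beta> = 1 - \<alpha>"
  have "\<beta> > 0"
    using assms by (simp add: \<beta>_def)
  have term_le: "(1 - 1 / real (Suc t) powr \<alpha>) ^ Suc t \<le> exp (- (real (Suc t) powr \<beta>))" for t
    using one_minus_inverse_powr_power_le_exp[of \<alpha> "Suc t"] assms by (simp add: \<beta>_def)
  have term_nonneg: "0 \<le> (1 - 1 / real (Suc t) powr \<alpha>) ^ Suc t" for t
    using assms by (simp add: ge_one_powr_ge_zero)
  have summable: "summable (\<lambda>t. (1 - 1 / real (Suc t) powr \<alpha>) ^ Suc t)"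
    using term_le term_nonneg
    by (intro summable_comparison_test'[OF summable_exp_neg_powr[OF \<open>\<beta> > 0\<close>]]) auto
  have "(\<Sum>t. (1 - 1 / real (Suc t) powr \<alpha>) ^ Suc t) \<le> (\<Sum>t. exp (- (real (Suc t) powr \<beta>)))"
    using term_le summable summable_exp_neg_powr[OF \<open>\<beta> > 0\<close>] by (rule suminf_le)
  also have "\<dots> \<le> 1 / \<beta> * Gamma (1 / \<beta>)"
    using \<open>\<beta> > 0\<close> by (rule suminf_exp_neg_powr_le_Gamma)
  finally show ?thesis
    using summable by (simp add: \<beta>_def)
qed

end
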